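(* Let $\Theta\subset\mathbb{R}^p$ be compact and convex, let $\mathcal U$ be an open neighborhood of $\Theta$, and let $\mathscr F:\mathcal U\to\mathbb{R}$ be continuously differentiable. Let $\mathscr G:\Theta\times\Theta\to\mathbb R$ be differentiable in its first argument and satisfy, for all $\boldsymbol\theta,\boldsymbol\theta'\in\Theta$: (majorization) $\mathscr G(\boldsymbol\theta\mid\boldsymbol\theta')\ge\mathscr F(\boldsymbol\theta)$; (strong tangency) $\mathscr G(\boldsymbol\theta\mid\boldsymbol\theta)=\mathscr F(\boldsymbol\theta)$ and $\nabla_1\mathscr G(\boldsymbol\theta\mid\boldsymbol\theta)=\nabla\mathscr F(\boldsymbol\theta)$; (regularity) for each fixed $\boldsymbol\theta'$, $\nabla_1\mathscr G(\cdot\mid\boldsymbol\theta')$ is $L$-Lipschitz on $\Theta$. Let $(\varepsilon_t)_{t\ge0}$, $(\delta_t)_{t\ge0}$ be sequences of strictly positive numbers with $\sum_t\varepsilon_t<\infty$ and $\sum_t\delta_t\le\delta$ for some $\delta\in(0,1)$. Let $(\widehat{\boldsymbol\theta}_t)_{t\ge0}$ be generated by $\widehat{\boldsymbol\theta}_{t+1}\in\arg\min_{\boldsymbol\theta\in\Theta}\widehat{\mathscr G}_t(\boldsymbol\theta\mid\widehat{\boldsymbol\theta}_t)$, where $\widehat{\mathscr G}_t(\cdot\mid\cdot)$ are random approximations of $\mathscr G$ such that for every $t\ge0$, $$\mathbb P\Big(\max_{\boldsymbol\theta\in\Theta}\big|\mathscr G(\boldsymbol\theta\mid\widehat{\boldsymbol\theta}_t)-\widehat{\mathscr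 G}_t(\boldsymbol\theta\mid\widehat{\boldsymbol\theta}_t)\big|\le\tfrac{\varepsilon_t}{2}\ \Big|\ \widehat{\boldsymbol\theta}_t\Big)\ge1-\delta_t .$$ Then, with probability at least $1-\delta$, every accumulation point $\boldsymbol\theta^*$ of $(\widehat{\boldsymbol\theta}_t)$ is a first-order stationary point of $\mathscr F$ over $\Theta$, i.e. $\langle\nabla\mathscr F(\boldsymbol\theta^* ),\boldsymbol\theta-\boldsymbol\theta^*\rangle\ge0$ for all $\boldsymbol\theta\in\Theta$.
   Context: $\nabla_1\mathscr G(\boldsymbol\theta\mid\boldsymbol\theta')$ denotes the gradient of $\mathscr G$ with respect to its first argument $\boldsymbol\theta$, with the anchor $\boldsymbol\theta'$ held fixed. $\langle\cdot,\cdot\rangle$ is the Euclidean inner product. *)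

theory Defs
  imports "HOL-Analysis.Analysis" "HOL-Probability.Probability"
begin

definition cond_prob_given :: "'a measure \<Rightarrow> ('a \<Rightarrow> 'b::topological_space) \<Rightarrow> 'a set \<Rightarrow> 'a \<Rightarrow> real" where
  "cond_prob_given M X A = real_cond_exp M (vimage_algebra (space M) X borel) (indicator A)"

definition seq_accumulation_point :: "(nat \<Rightarrow> 'b::topological_space) \<Rightarrow> 'b \<Rightarrow> bool" where
  "seq_accumulation_point s x \<longleftrightarrow> (\<exists>r. strict_mono r \<and> (s \<circ> r) \<longlonglongrightarrow> x)"

end

theory Submission
  imports Defs
begin

text \<open>On the event that every surrogate is \<open>\<epsilon>\<^sub>t/2\<close>-accurate, which by the union bound has
  probability at least \<open>1 - \<Sum>\<delta>\<^sub>t \<ge> 1 - \<delta>\<close>, every iterate satisfies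
  \<open>F(\<theta>\<^sub>t\<^sub>+\<^sub>1) \<le> G(\<theta> | \<theta>\<^sub>t) + \<epsilon>\<^sub>t\<close> for all \<open>\<theta> \<in> \<Theta>\<close>. With \<open>\<theta> = \<theta>\<^sub>t\<close> this makes \<open>F(\<theta>\<^sub>t)\<close>
  decreasing up to summable errors, hence convergent. With \<open>\<theta> = \<theta>\<^sub>t + s(\<theta>' - \<theta>\<^sub>t)\<close>, tangency
  and the Lipschitz gradient of the surrogate give
  \<open>F(\<theta>\<^sub>t\<^sub>+\<^sub>1) \<le> F(\<theta>\<^sub>t) + s\<langle>\<nabla>F(\<theta>\<^sub>t), \<theta>' - \<theta>\<^sub>t\<rangle> + L s\<^sup>2 \<parallel>\<theta>' - \<theta>\<^sub>t\<parallel>\<^sup>2 + \<epsilon>\<^sub>t\<close>; along a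
  subsequence tending to \<open>\<theta>\<^sup>*\<close> both sides of this tend to the same limit of \<open>F\<close>, so
  \<open>0 \<le> \<langle>\<nabla>F(\<theta>\<^sup>*), \<theta>' - \<theta>\<^sup>*\<rangle> + L s \<parallel>\<theta>' - \<theta>\<^sup>*\<parallel>\<^sup>2\<close> for every \<open>s \<in> (0,1]\<close>.\<close>

lemma (in prob_space) prob_ge_if_AE_cond_prob_given_ge:
  assumes X: "X \<in> borel_measurable M" and E: "E \<in> events"
    and ae: "AE \<omega> in M. c \<le> cond_prob_given M X E \<omega>"
  shows "c \<le> prob E"
proof -
  let ?F = "vimage_algebra (space M) X borel"
  have "subalgebra M ?F"
    unfolding subalgebra_def using sets_image_in_sets[OF refl X] by simp
  then interpret finite_measure_subalgebra M ?F
    by unfold_locales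
  have int: "integrable M (indicator E :: 'a \<Rightarrow> real)"
    using E by (intro integrable_real_indicator) (auto simp: emeasure_eq_measure)
  have "c = (\<integral>\<omega>. c \<partial>M)" by (simp add: prob_space)
  also have "\<dots> \<le> (\<integral>\<omega>. real_cond_exp M ?F (indicator E) \<omega> \<partial>M)"
    using ae real_cond_exp_int(1)[OF int]
    by (intro integral_mono_AE) (auto simp: cond_prob_given_def)
  also have "\<dots> = (\<integral>\<omega>. indicator E \<omega> \<partial>M)" by (rule real_cond_exp_int(2)[OF int])
  also have "\<dots> = prob E" using E by simp
  finally show ?thesis .
qed

lemma (in prob_space) prob_INT_ge_one_minus_suminf:
  assumes E: "\<And>t. E t \<in> events" and prob_E: "\<And>t. 1 - d t \<le> prob (E t)"
    and d: "summable d"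
  shows "1 - (\<Sum>t. d t) \<le> prob (\<Inter>t. E t)"
proof -
  have fail: "prob (space M - E t) \<le> d t" for t
    using prob_compl[OF E] prob_E[of t] by simp
  have fail_summable: "summable (\<lambda>t. prob (space M - E t))"
    using fail by (intro summable_comparison_test'[OF d]) auto
  have "prob (space M - (\<Inter>t. E t)) = prob (\<Union>t. space M - E t)" by simp
  also have "\<dots> \<le> (\<Sum>t. prob (space M - E t))"
    using E fail_summable by (intro finite_measure_subadditive_countably) auto
  also have "\<dots> \<le> (\<Sum>t. d t)" by (rule suminf_le[OF fail fail_summable d])
  finally show ?thesis using prob_compl[of "\<Inter>t. E t"] E by auto
qed

lemma convergent_almost_decseq:
  fixes a e :: "nat \<Rightarrow> real"
  assumes step: "\<And>n. a (Suc n) \<le> a n + e n" and e_nonneg: "\<And>n. 0 \<le> e n"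
    and e: "summable e" and bdd: "bdd_below (range a)"
  shows "convergent a"
proof -
  define b where "b n = a n - (\<Sum>i<n. e i)" for n
  have "decseq b" unfolding decseq_Suc_iff b_def using step by (simp add: algebra_simps)
  moreover have "(INF n. a n) - suminf e \<le> b n" for n
  proof -
    have "(\<Sum>i<n. e i) \<le> suminf e" using e e_nonneg by (intro sum_le_suminf) auto
    moreover have "(INF n. a n) \<le> a n" using bdd by (rule cINF_lower) simp
    ultimately show ?thesis unfolding b_def by linarith
  qed
  ultimately obtain l where "b \<longlonglongrightarrow> l" by (metis decseq_convergent)
  then have "(\<lambda>n. b n + (\<Sum>i<n. e i)) \<longlonglongrightarrow> l + suminf e"
    by (intro tendsto_add summable_LIMSEQ e)
  then show ?thesis unfolding b_def convergent_def by auto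
qed

lemma nonneg_if_add_linear_nonneg:
  fixes g C :: real
  assumes "\<And>s. 0 < s \<Longrightarrow> s \<le> 1 \<Longrightarrow> 0 \<le> g + C * s"
  shows "0 \<le> g"
proof (rule tendsto_lowerbound)
  show "((\<lambda>s. g + C * s) \<longlongrightarrow> g) (at_right 0)"
    by (auto intro!: tendsto_eq_intros)
  show "\<forall>\<^sub>F s in at_right 0. 0 \<le> g + C * s"
  proof -
    have "\<forall>\<^sub>F s in at_right 0. s \<in> {0<..<1::real}" by (rule eventually_at_right_real) simp
    then show ?thesis by eventually_elim (use assms in auto)
  qed
qed simp

lemma convex_add_scaleR_diff_mem:
  assumes "convex S" "a \<in> S" "b \<in> S" "0 \<le> u" "u \<le> 1"
  shows "a + u *\<^sub>R (b - a) \<in> S"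
proof -
  have "a + u *\<^sub>R (b - a) = (1 - u) *\<^sub>R a + u *\<^sub>R b" by (simp add: algebra_simps)
  then show ?thesis using assms by (auto intro: convexD)
qed

text \<open>The mean value theorem is used instead of integration, hence \<open>L\<close> rather than \<open>L/2\<close>.\<close>

lemma lipschitz_gradient_quadratic_upper_bound:
  fixes f :: "'v::real_inner \<Rightarrow> real"
  assumes S: "convex S" and a: "a \<in> S" and b: "b \<in> S"
    and deriv: "\<And>x. x \<in> S \<Longrightarrow> (f has_derivative (\<lambda>h. f' x \<bullet> h)) (at x within S)"
    and lip: "L-lipschitz_on S f'"
  shows "f b \<le> f a + f' a \<bullet> (b - a) + L * (norm (b - a))\<^sup>2"
proof -
  define d where "d = b - a"
  have path_in: "a + u *\<^sub>R d \<in> S" if "u \<in> {0..1}" for u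
    using convex_add_scaleR_diff_mem[OF S a b] that by (simp add: d_def)
  have path_deriv: "((\<lambda>u. f (a + u *\<^sub>R d)) has_derivative (\<lambda>v. f' (a + u *\<^sub>R d) \<bullet> (v *\<^sub>R d)))
      (at u within {0..1})" if "u \<in> {0..1}" for u
  proof -
    have line: "((\<lambda>u. a + u *\<^sub>R d) has_derivative (\<lambda>v. v *\<^sub>R d)) (at u within {0..1})"
      by (auto intro!: derivative_eq_intros)
    have "(f has_derivative (\<lambda>h. f' (a + u *\<^sub>R d) \<bullet> h))
        (at (a + u *\<^sub>R d) within (\<lambda>u. a + u *\<^sub>R d) ` {0..1})"
      by (rule has_derivative_subset[OF deriv[OF path_in[OF that]]]) (auto intro: path_in)
    from diff_chain_within[OF line this] show ?thesis by (simp add: o_def)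
  qed
  obtain u where u: "u \<in> {0<..<1}" and mvt: "f (a + d) - f a = f' (a + u *\<^sub>R d) \<bullet> d"
    using mvt_simple[of 0 1 "\<lambda>u. f (a + u *\<^sub>R d)", OF _ path_deriv] by auto
  have "norm (f' (a + u *\<^sub>R d) - f' a) \<le> L * norm (u *\<^sub>R d)"
    using lipschitz_onD[OF lip path_in a] u by (simp add: dist_norm)
  also have "\<dots> \<le> L * norm d"
    using u lipschitz_on_nonneg[OF lip] by (intro mult_left_mono) (auto intro!: mult_left_le_one_le)
  finally have "(f' (a + u *\<^sub>R d) - f' a) \<bullet> d \<le> L * norm d * norm d"
    by (meson norm_cauchy_schwarz mult_right_mono norm_ge_zero order_trans)
  then show ?thesis using mvt by (simp add: d_def inner_diff_left power2_eq_square)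
qed

lemma minimizer_of_approximation_le:
  fixes f g :: "'v \<Rightarrow> real"
  assumes close: "\<And>v. v \<in> S \<Longrightarrow> \<bar>f v - g v\<bar> \<le> e / 2"
    and y: "y \<in> S" and y_min: "\<And>v. v \<in> S \<Longrightarrow> g y \<le> g v" and v: "v \<in> S"
  shows "f y \<le> f v + e"
  using close[OF y] close[OF v] y_min[OF v] by linarith

lemma stationary_if_perturbed_descent:
  fixes x :: "nat \<Rightarrow> 'v::real_inner"
  assumes \<Theta>: "closed \<Theta>" and gradF_cont: "continuous_on \<Theta> gradF"
    and x_in: "\<And>t. x t \<in> \<Theta>" and F_lim: "(\<lambda>t. F (x t)) \<longlonglongrightarrow> Fs" and eps_lim: "\<epsilon> \<longlonglongrightarrow> 0"
    and descent: "\<And>t s \<theta>. \<theta> \<in> \<Theta> \<Longrightarrow> 0 < s \<Longrightarrow> s \<le> 1 \<Longrightarrow>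
        F (x (Suc t)) \<le> F (x t) + s * (gradF (x t) \<bullet> (\<theta> - x t)) + C * s\<^sup>2 * (norm (\<theta> - x t))\<^sup>2 + \<epsilon> t"
    and acc: "seq_accumulation_point x \<theta>s" and \<theta>: "\<theta> \<in> \<Theta>"
  shows "0 \<le> gradF \<theta>s \<bullet> (\<theta> - \<theta>s)"
proof -
  from acc obtain r where r: "strict_mono r" and x_r: "(\<lambda>k. x (r k)) \<longlonglongrightarrow> \<theta>s"
    unfolding seq_accumulation_point_def by (auto simp: o_def)
  have \<theta>s: "\<theta>s \<in> \<Theta>" using closed_sequentially[OF \<Theta> _ x_r] x_in by auto
  have gradF_lim: "(\<lambda>k. gradF (x (r k))) \<longlonglongrightarrow> gradF \<theta>s"
    using x_in by (intro continuous_on_tendsto_compose[OF gradF_cont x_r \<theta>s]) auto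
  define g where "g = gradF \<theta>s \<bullet> (\<theta> - \<theta>s)"
  define D where "D = (norm (\<theta> - \<theta>s))\<^sup>2"
  have "0 \<le> g + (C * D) * s" if s: "0 < s" "s \<le> 1" for s
  proof -
    have "Fs \<le> Fs + s * g + C * s\<^sup>2 * D + 0"
    proof (rule LIMSEQ_le[OF _ _ exI[of _ 0]])
      show "(\<lambda>k. F (x (Suc (r k)))) \<longlonglongrightarrow> Fs"
        using LIMSEQ_subseq_LIMSEQ[OF F_lim[THEN LIMSEQ_Suc] r] by (simp add: o_def)
      have "(\<lambda>k. F (x (r k))) \<longlonglongrightarrow> Fs"
        using LIMSEQ_subseq_LIMSEQ[OF F_lim r] by (simp add: o_def)
      moreover have "(\<lambda>k. \<epsilon> (r k)) \<longlonglongrightarrow> 0"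
        using LIMSEQ_subseq_LIMSEQ[OF eps_lim r] by (simp add: o_def)
      ultimately show "(\<lambda>k. F (x (r k)) + s * (gradF (x (r k)) \<bullet> (\<theta> - x (r k)))
          + C * s\<^sup>2 * (norm (\<theta> - x (r k)))\<^sup>2 + \<epsilon> (r k)) \<longlonglongrightarrow> Fs + s * g + C * s\<^sup>2 * D + 0"
        unfolding g_def D_def by (intro tendsto_intros gradF_lim x_r)
    qed (use descent[OF \<theta> s] in auto)
    then have "0 \<le> s * (g + (C * D) * s)" by (simp add: algebra_simps power2_eq_square)
    then show ?thesis using s by (simp add: zero_le_mult_iff)
  qed
  then show ?thesis unfolding g_def by (rule nonneg_if_add_linear_nonneg)
qed

lemma inexact_MM_accumulation_point_stationary:
  fixes \<Theta> :: "'v::euclidean_space set" and x :: "nat \<Rightarrow> 'v"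
  assumes Theta: "compact \<Theta>" "convex \<Theta>"
    and F_cont: "continuous_on \<Theta> F" and gradF_cont: "continuous_on \<Theta> gradF"
    and G_deriv: "\<And>\<theta> \<theta>'. \<theta> \<in> \<Theta> \<Longrightarrow> \<theta>' \<in> \<Theta> \<Longrightarrow>
        ((\<lambda>x. G x \<theta>') has_derivative (\<lambda>h. grad1G \<theta> \<theta>' \<bullet> h)) (at \<theta> within \<Theta>)"
    and tang: "\<And>\<theta>. \<theta> \<in> \<Theta> \<Longrightarrow> G \<theta> \<theta> = F \<theta>"
    and tang_grad: "\<And>\<theta>. \<theta> \<in> \<Theta> \<Longrightarrow> grad1G \<theta> \<theta> = gradF \<theta>"
    and lip: "\<And>\<theta>'. \<theta>' \<in> \<Theta> \<Longrightarrow> L-lipschitz_on \<Theta> (\<lambda>\<theta>. grad1G \<theta> \<theta>')"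
    and eps_nonneg: "\<And>t. 0 \<le> \<epsilon> t" and eps_sum: "summable \<epsilon>"
    and x_in: "\<And>t. x t \<in> \<Theta>"
    and step: "\<And>t \<theta>. \<theta> \<in> \<Theta> \<Longrightarrow> F (x (Suc t)) \<le> G \<theta> (x t) + \<epsilon> t"
    and acc: "seq_accumulation_point x \<theta>s" and \<theta>: "\<theta> \<in> \<Theta>"
  shows "0 \<le> gradF \<theta>s \<bullet> (\<theta> - \<theta>s)"
proof -
  have "bdd_below (F ` \<Theta>)"
    using compact_continuous_image[OF F_cont Theta(1)]
    by (auto intro: bounded_imp_bdd_below compact_imp_bounded)
  then have "bdd_below (range (\<lambda>t. F (x t)))"
    using x_in by (auto intro: bdd_below_mono)
  moreover have "F (x (Suc t)) \<le> F (x t) + \<epsilon> t" for t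
    using step[OF x_in[of t], of t] tang[OF x_in] by simp
  ultimately have "convergent (\<lambda>t. F (x t))"
    by (intro convergent_almost_decseq[OF _ eps_nonneg eps_sum])
  then obtain Fs where F_lim: "(\<lambda>t. F (x t)) \<longlonglongrightarrow> Fs" by (auto simp: convergent_def)
  have "F (x (Suc t)) \<le> F (x t) + s * (gradF (x t) \<bullet> (\<theta>' - x t)) + L * s\<^sup>2 * (norm (\<theta>' - x t))\<^sup>2 + \<epsilon> t"
    if \<theta>': "\<theta>' \<in> \<Theta>" and s: "0 < s" "s \<le> 1" for t s \<theta>'
  proof -
    let ?b = "x t + s *\<^sub>R (\<theta>' - x t)"
    have b: "?b \<in> \<Theta>" using convex_add_scaleR_diff_mem[OF Theta(2) x_in \<theta>'] s by simp
    have "G ?b (x t) \<le> G (x t) (x t) + grad1G (x t) (x t) \<bullet> (?b - x t) + L * (norm (?b - x t))\<^sup>2"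
      using G_deriv x_in
      by (intro lipschitz_gradient_quadratic_upper_bound[OF Theta(2) x_in b _ lip[OF x_in]]) auto
    also have "\<dots> = F (x t) + s * (gradF (x t) \<bullet> (\<theta>' - x t)) + L * s\<^sup>2 * (norm (\<theta>' - x t))\<^sup>2"
      using s tang[OF x_in] tang_grad[OF x_in] by (simp add: power_mult_distrib)
    finally show ?thesis using step[OF b, of t] by simp
  qed
  then show ?thesis
    using compact_imp_closed[OF Theta(1)] summable_LIMSEQ_zero[OF eps_sum]
    by (intro stationary_if_perturbed_descent[OF _ gradF_cont x_in F_lim _ _ acc \<theta>])
qed

theorem theorem4p4:
  fixes M :: "'a measure"
    and \<Theta> U :: "'v::euclidean_space set"
    and F :: "'v \<Rightarrow> real" and gradF :: "'v \<Rightarrow> 'v"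
    and G :: "'v \<Rightarrow> 'v \<Rightarrow> real" and grad1G :: "'v \<Rightarrow> 'v \<Rightarrow> 'v"
    and L :: real
    and \<epsilon> \<delta>s :: "nat \<Rightarrow> real" and \<delta> :: real
    and thetahat :: "nat \<Rightarrow> 'a \<Rightarrow> 'v"
    and Ghat :: "nat \<Rightarrow> 'a \<Rightarrow> 'v \<Rightarrow> 'v \<Rightarrow> real"
  assumes P: "prob_space M"
    and Theta: "compact \<Theta>" "convex \<Theta>"
    and U: "open U" "\<Theta> \<subseteq> U"
    and F_deriv: "\<And>x. x \<in> U \<Longrightarrow> (F has_derivative (\<lambda>h. gradF x \<bullet> h)) (at x)"
    and F_C1: "continuous_on U gradF"
    and G_deriv: "\<And>\<theta> \<theta>'. \<theta> \<in> \<Theta> \<Longrightarrow> \<theta>' \<in> \<Theta> \<Longrightarrow>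
        ((\<lambda>x. G x \<theta>') has_derivative (\<lambda>h. grad1G \<theta> \<theta>' \<bullet> h)) (at \<theta> within \<Theta>)"
    and major: "\<And>\<theta> \<theta>'. \<theta> \<in> \<Theta> \<Longrightarrow> \<theta>' \<in> \<Theta> \<Longrightarrow> G \<theta> \<theta>' \<ge> F \<theta>"
    and tang: "\<And>\<theta>. \<theta> \<in> \<Theta> \<Longrightarrow> G \<theta> \<theta> = F \<theta>"
    and tang_grad: "\<And>\<theta>. \<theta> \<in> \<Theta> \<Longrightarrow> grad1G \<theta> \<theta> = gradF \<theta>"
    and lip: "\<And>\<theta>'. \<theta>' \<in> \<Theta> \<Longrightarrow> L-lipschitz_on \<Theta> (\<lambda>\<theta>. grad1G \<theta> \<theta>')"
    and eps_pos: "\<And>t. \<epsilon> t > 0" and eps_sum: "summable \<epsilon>"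
    and del_pos: "\<And>t. \<delta>s t > 0" and del_sum: "summable \<delta>s" "(\<Sum>t. \<delta>s t) \<le> \<delta>"
    and del: "0 < \<delta>" "\<delta> < 1"
    and meas: "\<And>t. thetahat t \<in> borel_measurable M"
    and init: "\<And>\<omega>. \<omega> \<in> space M \<Longrightarrow> thetahat 0 \<omega> \<in> \<Theta>"
    and argmin: "\<And>t \<omega>. \<omega> \<in> space M \<Longrightarrow>
        thetahat (Suc t) \<omega> \<in> \<Theta> \<and>
        (\<forall>\<theta>\<in>\<Theta>. Ghat t \<omega> (thetahat (Suc t) \<omega>) (thetahat t \<omega>) \<le> Ghat t \<omega> \<theta> (thetahat t \<omega>))"
    and approx_event: "\<And>t. {\<omega>\<in>space M. \<forall>\<theta>\<in>\<Theta>.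
        \<bar>G \<theta> (thetahat t \<omega>) - Ghat t \<omega> \<theta> (thetahat t \<omega>)\<bar> \<le> \<epsilon> t / 2} \<in> sets M"
    and approx: "\<And>t. AE \<omega> in M. cond_prob_given M (thetahat t)
        {\<omega>\<in>space M. \<forall>\<theta>\<in>\<Theta>.
          \<bar>G \<theta> (thetahat t \<omega>) - Ghat t \<omega> \<theta> (thetahat t \<omega>)\<bar> \<le> \<epsilon> t / 2} \<omega> \<ge> 1 - \<delta>s t"
  shows "\<exists>A\<in>sets M. measure M A \<ge> 1 - \<delta> \<and>
    (\<forall>\<omega>\<in>A. \<forall>\<theta>s. seq_accumulation_point (\<lambda>t. thetahat t \<omega>) \<theta>s \<longrightarrow>
        (\<forall>\<theta>\<in>\<Theta>. gradF \<theta>s \<bullet> (\<theta> - \<theta>s) \<ge> 0))"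
proof -
  interpret prob_space M by (rule P)
  define E where "E t = {\<omega>\<in>space M. \<forall>\<theta>\<in>\<Theta>.
      \<bar>G \<theta> (thetahat t \<omega>) - Ghat t \<omega> \<theta> (thetahat t \<omega>)\<bar> \<le> \<epsilon> t / 2}" for t
  have E: "E t \<in> events" for t unfolding E_def by (rule approx_event)
  have "1 - \<delta>s t \<le> prob (E t)" for t
    using prob_ge_if_AE_cond_prob_given_ge[OF meas E approx[of t, folded E_def]] .
  then have "1 - (\<Sum>t. \<delta>s t) \<le> prob (\<Inter>t. E t)"
    by (rule prob_INT_ge_one_minus_suminf[OF E _ del_sum(1)])
  then have "1 - \<delta> \<le> prob (\<Inter>t. E t)" using del_sum(2) by linarith
  moreover have "0 \<le> gradF \<theta>s \<bullet> (\<theta> - \<theta>s)"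
    if \<omega>: "\<omega> \<in> (\<Inter>t. E t)" and acc: "seq_accumulation_point (\<lambda>t. thetahat t \<omega>) \<theta>s"
      and \<theta>: "\<theta> \<in> \<Theta>" for \<omega> \<theta>s \<theta>
  proof (rule inexact_MM_accumulation_point_stationary[OF Theta _ _ G_deriv tang tang_grad lip _ eps_sum _ _ acc \<theta>])
    have \<omega>_space: "\<omega> \<in> space M" using \<omega> unfolding E_def by auto
    show x_in: "thetahat t \<omega> \<in> \<Theta>" for t
      using init[OF \<omega>_space] argmin[OF \<omega>_space] by (cases t) auto
    show "F (thetahat (Suc t) \<omega>) \<le> G \<theta>' (thetahat t \<omega>) + \<epsilon> t" if \<theta>': "\<theta>' \<in> \<Theta>" for t \<theta>'
    proof -
      have "F (thetahat (Suc t) \<omega>) \<le> G (thetahat (Suc t) \<omega>) (thetahat t \<omega>)"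
        by (rule major[OF x_in x_in])
      also have "\<dots> \<le> G \<theta>' (thetahat t \<omega>) + \<epsilon> t"
        using \<omega> argmin[OF \<omega>_space] \<theta>' unfolding E_def
        by (intro minimizer_of_approximation_le[where g = "\<lambda>v. Ghat t \<omega> v (thetahat t \<omega>)"]) auto
      finally show ?thesis .
    qed
    show "continuous_on \<Theta> F"
      using F_deriv U(2) has_derivative_continuous by (blast intro: continuous_at_imp_continuous_on)
    show "continuous_on \<Theta> gradF" using continuous_on_subset[OF F_C1 U(2)] .
  qed (use eps_pos in \<open>auto intro: less_imp_le\<close>)
  ultimately show ?thesis using E by blast
qed

end
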